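(* Let $F(a,b,c)=\big(\tfrac{c-b}{a},\tfrac{c+b}{a},2\ln a\big)$ for $a>0$, $b,c\in\mathbb{R}$. For a compact set $X\subset(0,\infty)\times\mathbb{R}^2$ let $\mathcal{B}_X=\{\begin{pmatrix}a&b\\c&d\end{pmatrix}\in PSL_2(\mathbb{R}):F(a,b,c)\in X\}$ (with $a>0$, $ad-bc=1$). Then $$\mathrm{vol}(\mathcal{B}_X)=\int_Xe^{x_3}\,dx,$$ where $x=(x_1,x_2,x_3)$, the integral is with respect to Euclidean volume, and $\mathrm{vol}$ is the standard volume form on $PSL_2(\mathbb{R})$.
   Context: The standard volume on $PSL_2(\mathbb{R})\cong T_1(\mathbb{H}^2)$ is the one for which, for a closed hyperbolic surface $S$, the induced volume of $T_1(S)$ equals $2\pi\,\mathrm{area}(S)$ (hyperbolic area times angle in the fibers). *)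

theory Defs
  imports "HOL-Analysis.Analysis"
begin

text \<open>A 2x2 real matrix (a b; c d) is represented as the tuple (a,b,c,d).
  An element of PSL_2(R) is the class {g, -g} of a matrix g in SL_2(R).\<close>

definition mat_neg :: "real \<times> real \<times> real \<times> real \<Rightarrow> real \<times> real \<times> real \<times> real" where
  "mat_neg g = (case g of (a,b,c,d) \<Rightarrow> (-a,-b,-c,-d))"

text \<open>Iwasawa parametrisation g = n(x) a(y) k(theta) of SL_2(R):
  n(x) = (1 x; 0 1), a(y) = diag(sqrt y, 1/sqrt y), k(theta) = rotation by theta.
  Under PSL_2(R) = T_1(H^2), g corresponds to the base point g.i = x + i y and the
  unit tangent vector at it of angle 2 theta (measured in the upper half plane).\<close>

definition iwasawa :: "real \<Rightarrow> real \<Rightarrow> real \<Rightarrow> real \<times> real \<times> real \<times> real" where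
  "iwasawa x y \<theta> =
     (sqrt y * cos \<theta> + x * sin \<theta> / sqrt y,
      - sqrt y * sin \<theta> + x * cos \<theta> / sqrt y,
      sin \<theta> / sqrt y,
      cos \<theta> / sqrt y)"

text \<open>Standard volume on PSL_2(R) = T_1(H^2): hyperbolic area (dx dy / y^2) times
  the angle phi in the fibres (phi in [0, 2 pi)). A set B of matrices is read as the
  set of classes {g,-g} that meet B.\<close>

definition psl2_std_vol :: "(real \<times> real \<times> real \<times> real) set \<Rightarrow> ennreal" where
  "psl2_std_vol B =
     (\<integral>\<^sup>+ p. indicator {(x, y, \<phi>). 0 < y \<and> 0 \<le> \<phi> \<and> \<phi> < 2 * pi \<and>
                 (iwasawa x y (\<phi> / 2) \<in> B \<or> mat_neg (iwasawa x y (\<phi> / 2)) \<in> B)} p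
              * ennreal (1 / (fst (snd p))\<^sup>2) \<partial>(lborel :: (real \<times> real \<times> real) measure))"

definition F_map :: "real \<Rightarrow> real \<Rightarrow> real \<Rightarrow> real \<times> real \<times> real" where
  "F_map a b c = ((c - b) / a, (c + b) / a, 2 * ln a)"

definition calB :: "(real \<times> real \<times> real) set \<Rightarrow> (real \<times> real \<times> real \<times> real) set" where
  "calB X = {(a, b, c, d). 0 < a \<and> a * d - b * c = 1 \<and> F_map a b c \<in> X}"

end

(* Parametrise PSL_2(R) by w = (x, y, phi), the class of n(x) a(y) k(phi/2) with phi in [0, 2 pi);
   in these coordinates the standard volume has density 1/y^2. Off the null set where the entry a
   vanishes (such classes do not meet B_X), the composite of F with this parametrisation is a
   diffeomorphism onto R^3, once F is extended evenly to a < 0 so that it is defined on classes.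
   Its Jacobian determinant is the product of -a/(4 y^2) (from (x, y, phi) to (a, b, c)) and
   -4/a^3 (from (a, b, c) to F), while exp (F_3) = a^2; so the change of variables formula pulls
   the density e^(x_3) back to exactly 1/y^2. *)

theory Submission
  imports Defs
begin

text \<open>The change of variables theorem is available on real^n, so integrals over
  real \<times> real \<times> real are transported along vec3.\<close>

definition vec3 :: "real \<times> real \<times> real \<Rightarrow> real^3" where
  "vec3 p = (\<chi> i. if i = 1 then fst p else if i = 2 then fst (snd p) else snd (snd p))"

lemma vec3_nth [simp]:
  "vec3 p $ 1 = fst p" "vec3 p $ 2 = fst (snd p)" "vec3 p $ 3 = snd (snd p)"
  by (simp_all add: vec3_def)

lemma vector_eq_vec3: "vector [x, y, z] = vec3 (x, y, z)"
  by (simp add: vec_eq_iff forall_3)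

lemma inj_vec3: "inj vec3"
  by (rule injI) (metis vec3_nth prod_eq_iff)

lemma continuous_on_vec3: "continuous_on UNIV vec3"
  unfolding vec3_def
proof (intro continuous_on_vec_lambda)
  fix i :: 3
  show "continuous_on UNIV (\<lambda>p::real \<times> real \<times> real.
          if i = 1 then fst p else if i = 2 then fst (snd p) else snd (snd p))"
    by (cases "i = 1"; cases "i = 2") (auto intro!: continuous_intros)
qed

lemma borel_measurable_vec3 [measurable]: "vec3 \<in> borel_measurable borel"
  by (rule borel_measurable_continuous_onI[OF continuous_on_vec3])

lemma distr_lborel_vec3: "distr lborel borel vec3 = lborel"
proof (rule lborel_eqI[symmetric])
  fix l u :: "real^3"
  assume "\<And>b. b \<in> Basis \<Longrightarrow> l \<bullet> b \<le> u \<bullet> b"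
  then have le: "l$i \<le> u$i" for i
    by (auto simp: Basis_vec_def cart_eq_inner_axis)
  have box: "vec3 -` box l u = {l$1<..<u$1} \<times> {l$2<..<u$2} \<times> {l$3<..<u$3}"
    by (auto simp: mem_box_cart forall_3)
  have emeasure_Times: "emeasure lborel (A \<times> B) = emeasure lborel A * emeasure lborel B"
    if "A \<in> sets borel" "B \<in> sets borel"
    for A :: "'a::euclidean_space set" and B :: "'b::euclidean_space set"
    using that lborel.emeasure_pair_measure_Times[of A lborel B] by (simp add: lborel_prod[symmetric])
  have "emeasure (distr lborel borel vec3) (box l u) = emeasure lborel (vec3 -` box l u)"
    by (simp add: emeasure_distr)
  also have "\<dots> = ennreal (u$1 - l$1) * (ennreal (u$2 - l$2) * ennreal (u$3 - l$3))"
    unfolding box using le by (simp add: emeasure_Times borel_prod[symmetric])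
  also have "\<dots> = ennreal (\<Prod>i\<in>UNIV. (u - l) $ i)"
    unfolding UNIV_3 using le by (simp add: ennreal_mult' mult.assoc)
  also have "(\<Prod>i\<in>UNIV. (u - l) $ i) = (\<Prod>b\<in>Basis. (u - l) \<bullet> b)"
  proof -
    have Basis: "(Basis :: (real^3) set) = range (\<lambda>i. axis i 1)"
      by (auto simp: Basis_vec_def)
    have "inj (\<lambda>i::3. axis i (1::real))"
      by (auto simp: inj_on_def axis_eq_axis)
    then show ?thesis
      unfolding Basis by (simp add: prod.reindex cart_eq_inner_axis)
  qed
  finally show "emeasure (distr lborel borel vec3) (box l u) = (\<Prod>b\<in>Basis. (u - l) \<bullet> b)" .
qed simp

lemma nn_integral_vec3:
  assumes "g \<in> borel_measurable borel"
  shows "(\<integral>\<^sup>+ p. g (vec3 p) \<partial>lborel) = (\<integral>\<^sup>+ w. g w \<partial>lborel)"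
  using nn_integral_distr[of vec3 lborel borel g] assms by (simp add: distr_lborel_vec3)

lemma nn_integral_change_of_variables:
  fixes g :: "real^'n::{finite,wellorder} \<Rightarrow> real^'n::_" and f :: "real^'n::_ \<Rightarrow> real"
  assumes S: "S \<in> sets lebesgue"
    and der: "\<And>x. x \<in> S \<Longrightarrow> (g has_derivative g' x) (at x within S)"
    and inj: "inj_on g S"
    and f: "f absolutely_integrable_on g ` S" "\<And>y. y \<in> g ` S \<Longrightarrow> 0 \<le> f y"
  shows "(\<integral>\<^sup>+ x. ennreal (\<bar>det (matrix (g' x))\<bar> * f (g x)) * indicator S x \<partial>lborel) =
         (\<integral>\<^sup>+ y. ennreal (f y) * indicator (g ` S) y \<partial>lborel)"
proof -
  define I where "I = integral (g ` S) f"
  have "(\<lambda>x. \<bar>det (matrix (g' x))\<bar> * f (g x)) absolutely_integrable_on S \<and>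
        integral S (\<lambda>x. \<bar>det (matrix (g' x))\<bar> * f (g x)) = I"
    using has_absolute_integral_change_of_variables[OF S der inj, of "\<lambda>y. vec (f y) :: real^1" "vec I"] f(1)
    by (simp add: absolutely_integrable_on_1_iff integral_on_1_eq I_def vec_eq_iff)
  then have "((\<lambda>x. \<bar>det (matrix (g' x))\<bar> * f (g x)) has_integral I) S"
    using set_lebesgue_integral_eq_integral(1) by (metis has_integral_integral)
  then have "(\<integral>\<^sup>+ x. ennreal (\<bar>det (matrix (g' x))\<bar> * f (g x)) * indicator S x \<partial>lborel) = ennreal I"
    using f(2) by (intro nn_integral_has_integral_lebesgue') auto
  moreover have "(f has_integral I) (g ` S)"
    using f(1) set_lebesgue_integral_eq_integral(1) unfolding I_def by (metis has_integral_integral)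
  then have "(\<integral>\<^sup>+ y. ennreal (f y) * indicator (g ` S) y \<partial>lborel) = ennreal I"
    using f(2) by (intro nn_integral_has_integral_lebesgue')
  ultimately show ?thesis by simp
qed

lemma iwasawa_eq:
  assumes "0 < y"
  shows "iwasawa x y t = ((y * cos t + x * sin t) / sqrt y, (x * cos t - y * sin t) / sqrt y,
                          sin t / sqrt y, cos t / sqrt y)"
  unfolding iwasawa_def using assms by (simp add: field_simps)

lemma iwasawa_coordinates:
  assumes "0 < y" "iwasawa x y t = (a, b, c, d)"
  shows "a * d - b * c = 1" "c\<^sup>2 + d\<^sup>2 = 1 / y" "a * c + b * d = x / y"
    "sin t = sqrt y * c" "cos t = sqrt y * d"
proof -
  define s where "s = sqrt y"
  have s: "0 < s" "y = s\<^sup>2" using assms(1) by (simp_all add: s_def)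
  have sc: "(sin t)\<^sup>2 + (cos t)\<^sup>2 = 1" by simp
  have entries: "a = (s\<^sup>2 * cos t + x * sin t) / s" "b = (x * cos t - s\<^sup>2 * sin t) / s"
      "c = sin t / s" "d = cos t / s"
    using assms unfolding s_def by (simp_all add: iwasawa_eq)
  show "a * d - b * c = 1" "c\<^sup>2 + d\<^sup>2 = 1 / y" "a * c + b * d = x / y"
    unfolding entries s(2) using s(1) by (simp_all add: field_simps) (use sc in algebra)+
  show "sin t = sqrt y * c" "cos t = sqrt y * d"
    unfolding entries s_def[symmetric] using s(1) by simp_all
qed

lemma mat_neg_mat_neg [simp]: "mat_neg (mat_neg g) = g"
  by (cases g) (simp add: mat_neg_def)

lemma iwasawa_add_pi: "iwasawa x y (t + pi) = mat_neg (iwasawa x y t)"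
  by (simp add: iwasawa_def mat_neg_def)

lemma iwasawa_psl2_unique:
  assumes "0 < y" "0 < y'" "0 \<le> t" "t < pi" "0 \<le> t'" "t' < pi"
    and "iwasawa x' y' t' = iwasawa x y t \<or> iwasawa x' y' t' = mat_neg (iwasawa x y t)"
  shows "x' = x \<and> y' = y \<and> t' = t"
proof -
  obtain a b c d where g: "iwasawa x y t = (a, b, c, d)"
    by (cases "iwasawa x y t") auto
  obtain \<sigma> :: real where \<sigma>: "\<sigma> = 1 \<or> \<sigma> = -1" "iwasawa x' y' t' = (\<sigma> * a, \<sigma> * b, \<sigma> * c, \<sigma> * d)"
  proof -
    consider "iwasawa x' y' t' = (a, b, c, d)" | "iwasawa x' y' t' = (- a, - b, - c, - d)"
      using assms(7) g by (auto simp: mat_neg_def)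
    then show thesis using that[of 1] that[of "-1"] by cases simp_all
  qed
  have \<sigma>\<sigma>: "\<sigma> * \<sigma> = 1" using \<sigma>(1) by auto
  note coords = iwasawa_coordinates[OF assms(1) g] and coords' = iwasawa_coordinates[OF assms(2) \<sigma>(2)]
  have "1 / y' = (\<sigma> * c)\<^sup>2 + (\<sigma> * d)\<^sup>2" using coords'(2) by simp
  also have "\<dots> = \<sigma> * \<sigma> * (c\<^sup>2 + d\<^sup>2)" by (simp add: power2_eq_square algebra_simps)
  also have "\<dots> = 1 / y" using coords(2) \<sigma>\<sigma> by simp
  finally have y: "y' = y" by simp
  have "x' / y' = (\<sigma> * a) * (\<sigma> * c) + (\<sigma> * b) * (\<sigma> * d)" using coords'(3) by simp
  also have "\<dots> = \<sigma> * \<sigma> * (a * c + b * d)" by (simp add: algebra_simps)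
  also have "\<dots> = x / y" using coords(3) \<sigma>\<sigma> by simp
  finally have x: "x' = x" using y assms(1) by simp
  have sin: "sin t' = \<sigma> * sin t" and cos: "cos t' = \<sigma> * cos t"
    using coords(4,5) coords'(4,5) y by simp_all
  have "\<sigma> = 1"
  proof (rule ccontr)
    assume "\<sigma> \<noteq> 1"
    with \<sigma>(1) sin have "sin t' = - sin t" by simp
    moreover have "0 \<le> sin t" "0 \<le> sin t'"
      using assms(3-6) by (simp_all add: sin_ge_zero)
    ultimately have "sin t = 0" "sin t' = 0" by linarith+
    then have "t = 0" "t' = 0"
      using assms(3-6) sin_eq_0_pi[of t] sin_eq_0_pi[of t'] by linarith+
    with cos \<open>\<sigma> \<noteq> 1\<close> \<sigma>(1) show False by simp
  qed
  with cos have "cos t' = cos t" by simp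
  then have "t' = t"
    using cos_inj_pi[of t' t] assms(3-6) by simp
  with x y show ?thesis by simp
qed

lemma iwasawa_psl2_exists:
  assumes det: "a * d - b * c = 1"
  obtains x y t where "0 < y" "0 \<le> t" "t < pi"
    "iwasawa x y t = (a, b, c, d) \<or> iwasawa x y t = mat_neg (a, b, c, d)"
proof -
  have nz: "c\<^sup>2 + d\<^sup>2 \<noteq> 0" using det by auto
  then have "0 < c\<^sup>2 + d\<^sup>2" by (simp add: sum_power2_gt_zero_iff)
  define y where "y = 1 / (c\<^sup>2 + d\<^sup>2)"
  define x where "x = y * (a * c + b * d)"
  define s where "s = sqrt y"
  have y: "0 < y" unfolding y_def using \<open>0 < c\<^sup>2 + d\<^sup>2\<close> by (rule divide_pos_pos[OF zero_less_one])
  then have s: "0 < s" "y = s\<^sup>2" by (simp_all add: s_def)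
  have norm: "s\<^sup>2 * (c\<^sup>2 + d\<^sup>2) = 1"
    unfolding s(2)[symmetric] y_def using nz by (metis nonzero_eq_divide_eq)
  then have "(s * d)\<^sup>2 + (s * c)\<^sup>2 = 1" by (simp add: power_mult_distrib algebra_simps)
  then obtain t0 where t0: "0 \<le> t0" "t0 < 2 * pi" "cos t0 = s * d" "sin t0 = s * c"
    using sincos_total_2pi by metis
  have "s\<^sup>2 * (d + (a * c + b * d) * c) = a * (s\<^sup>2 * (c\<^sup>2 + d\<^sup>2)) + s\<^sup>2 * d * (1 - (a * d - b * c))"
       "s\<^sup>2 * ((a * c + b * d) * d - c) = b * (s\<^sup>2 * (c\<^sup>2 + d\<^sup>2)) - s\<^sup>2 * c * (1 - (a * d - b * c))"
    by (simp_all add: algebra_simps power2_eq_square)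
  then have ab: "s\<^sup>2 * (d + (a * c + b * d) * c) = a" "s\<^sup>2 * ((a * c + b * d) * d - c) = b"
    unfolding det norm by simp_all
  have "y * cos t0 + x * sin t0 = s * (s\<^sup>2 * (d + (a * c + b * d) * c))"
      "x * cos t0 - y * sin t0 = s * (s\<^sup>2 * ((a * c + b * d) * d - c))"
    unfolding t0(3,4) x_def s(2) by (simp_all add: algebra_simps)
  then have "(y * cos t0 + x * sin t0) / sqrt y = a" "(x * cos t0 - y * sin t0) / sqrt y = b"
      "sin t0 / sqrt y = c" "cos t0 / sqrt y = d"
    unfolding s_def[symmetric] ab t0(3,4) using s(1) by simp_all
  then have "iwasawa x y t0 = (a, b, c, d)"
    by (simp add: iwasawa_eq[OF y])
  show thesis
  proof (cases "t0 < pi")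
    case True
    then show thesis using that y t0 \<open>iwasawa x y t0 = (a, b, c, d)\<close> by blast
  next
    case False
    have "iwasawa x y (t0 - pi) = mat_neg (a, b, c, d)"
      using iwasawa_add_pi[of x y "t0 - pi"] \<open>iwasawa x y t0 = (a, b, c, d)\<close> by simp
    then show thesis using that[of y "t0 - pi" x] y t0 False by simp
  qed
qed

text \<open>F on the entries (a, b, c), extended evenly to a < 0 via 2 ln a = ln (a^2).\<close>

definition F_vec :: "real^3 \<Rightarrow> real^3" where
  "F_vec v = vector [(v$3 - v$2) / v$1, (v$3 + v$2) / v$1, ln ((v$1)\<^sup>2)]"

lemma F_vec_uminus: "F_vec (- v) = F_vec v"
  by (simp add: F_vec_def vec_eq_iff forall_3 minus_divide_left)

lemma F_vec_eq_F_map: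
  assumes "0 < a"
  shows "F_vec (vector [a, b, c]) = vec3 (F_map a b c)"
  using assms by (simp add: F_vec_def F_map_def vector_eq_vec3 ln_realpow)

lemma F_vec_inj_same_first:
  assumes "v'$1 = v$1" "v$1 \<noteq> 0" "F_vec v' = F_vec v"
  shows "v' = v"
proof -
  have "(v'$3 - v'$2) / v$1 = (v$3 - v$2) / v$1" "(v'$3 + v'$2) / v$1 = (v$3 + v$2) / v$1"
    using assms(1,3) by (simp_all add: F_vec_def vec_eq_iff forall_3)
  then have "v'$3 - v'$2 = v$3 - v$2" "v'$3 + v'$2 = v$3 + v$2"
    using assms(2) by simp_all
  then show ?thesis
    using assms(1) by (simp add: vec_eq_iff forall_3)
qed

lemma F_vec_inj_pm:
  assumes "v$1 \<noteq> 0" "v'$1 \<noteq> 0" "F_vec v' = F_vec v"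
  shows "v' = v \<or> v' = - v"
proof -
  have "ln ((v'$1)\<^sup>2) = ln ((v$1)\<^sup>2)"
    using assms(3) by (simp add: F_vec_def vec_eq_iff forall_3)
  then have "(v'$1)\<^sup>2 = (v$1)\<^sup>2"
    using assms(1,2) by simp
  then consider "v'$1 = v$1" | "(- v')$1 = v$1"
    by (auto simp: power2_eq_iff)
  then show ?thesis
  proof cases
    case 1
    then show ?thesis using F_vec_inj_same_first assms by blast
  next
    case 2
    then have "- v' = v" using F_vec_inj_same_first assms by (simp add: F_vec_uminus)
    then show ?thesis by auto
  qed
qed

lemma F_vec_surj: "\<exists>v. 0 < v$1 \<and> F_vec v = u"
proof -
  define a where "a = exp (u$3 / 2)"
  have "ln (a\<^sup>2) = u$3"
    by (simp add: a_def power2_eq_square exp_add[symmetric])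
  then have "F_vec (vector [a, a * (u$2 - u$1) / 2, a * (u$1 + u$2) / 2]) = u"
    by (simp add: F_vec_def a_def vec_eq_iff forall_3 field_simps)
  moreover have "0 < a" by (simp add: a_def)
  ultimately show ?thesis by (metis vector_3(1))
qed

definition iwasawa_abc :: "real^3 \<Rightarrow> real^3" where
  "iwasawa_abc w = (case iwasawa (w$1) (w$2) (w$3 / 2) of (a, b, c, d) \<Rightarrow> vector [a, b, c])"

definition F_iwasawa :: "real^3 \<Rightarrow> real^3" where
  "F_iwasawa w = F_vec (iwasawa_abc w)"

definition iwasawa_jacobian :: "real^3 \<Rightarrow> real^3^3" where
  "iwasawa_jacobian w =
    (let x = w$1; y = w$2; s = sqrt y; S = sin (w$3 / 2); C = cos (w$3 / 2) in
     vector [vector [S / s, (C - x * S / y) / (2 * s), (x * C / s - s * S) / 2],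
             vector [C / s, - (S + x * C / y) / (2 * s), - (s * C + x * S / s) / 2],
             vector [0, - S / (2 * s * y), C / (2 * s)]])"

definition F_vec_jacobian :: "real^3 \<Rightarrow> real^3^3" where
  "F_vec_jacobian v =
    (let a = v$1; b = v$2; c = v$3 in
     vector [vector [- (c - b) / a\<^sup>2, - 1 / a, 1 / a],
             vector [- (c + b) / a\<^sup>2, 1 / a, 1 / a],
             vector [2 / a, 0, 0]])"

lemmas has_derivative_vec_nth [derivative_intros] =
  bounded_linear.has_derivative[OF bounded_linear_vec_nth]

lemma has_derivative_vec3I:
  fixes f :: "'a::real_normed_vector \<Rightarrow> real^3"
  assumes "((\<lambda>x. f x $ 1) has_derivative (\<lambda>h. f' h $ 1)) (at a within S)"
    and "((\<lambda>x. f x $ 2) has_derivative (\<lambda>h. f' h $ 2)) (at a within S)"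
    and "((\<lambda>x. f x $ 3) has_derivative (\<lambda>h. f' h $ 3)) (at a within S)"
  shows "(f has_derivative f') (at a within S)"
proof (subst has_derivative_componentwise_within, intro ballI)
  fix b :: "real^3" assume "b \<in> Basis"
  then obtain i where b: "b = axis i 1" by (auto simp: Basis_vec_def)
  have "((\<lambda>x. f x $ i) has_derivative (\<lambda>h. f' h $ i)) (at a within S)"
    using assms exhaust_3[of i] by auto
  then show "((\<lambda>x. f x \<bullet> b) has_derivative (\<lambda>x. f' x \<bullet> b)) (at a within S)"
    by (simp add: b cart_eq_inner_axis[symmetric])
qed

lemma has_derivative_iwasawa_abc:
  assumes "0 < w$2"
  shows "(iwasawa_abc has_derivative (\<lambda>h. iwasawa_jacobian w *v h)) (at w)"
proof -
  have s: "sqrt (w$2) * sqrt (w$2) = w$2" "sqrt (w$2) * (sqrt (w$2) * z) = w$2 * z" for z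
    using assms by (simp_all add: mult.assoc[symmetric])
  show ?thesis
    unfolding iwasawa_abc_def iwasawa_def
    apply (rule has_derivative_vec3I)
      apply (simp_all add: matrix_vector_mult_def sum_3 iwasawa_jacobian_def Let_def)
    using assms by (auto intro!: derivative_eq_intros simp: field_simps s)
qed

lemma det_iwasawa_jacobian:
  assumes "0 < w$2"
  shows "det (iwasawa_jacobian w) = - iwasawa_abc w $ 1 / (4 * (w$2)\<^sup>2)"
proof -
  define s S C where "s = sqrt (w$2)" and "S = sin (w$3 / 2)" and "C = cos (w$3 / 2)"
  have s: "w$2 = s\<^sup>2" "0 < s" using assms by (simp_all add: s_def)
  have SC: "S\<^sup>2 + C\<^sup>2 = 1" by (simp add: S_def C_def)
  show ?thesis
    unfolding iwasawa_abc_def iwasawa_def iwasawa_jacobian_def Let_def det_3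
      s_def[symmetric] S_def[symmetric] C_def[symmetric]
    using s(2) by (simp add: field_simps s(1)) (use SC in algebra)
qed

lemma has_derivative_F_vec:
  assumes "v$1 \<noteq> 0"
  shows "(F_vec has_derivative (\<lambda>h. F_vec_jacobian v *v h)) (at v)"
proof -
  have pos: "0 < v$1 * v$1" using assms not_real_square_gt_zero by blast
  show ?thesis
    unfolding F_vec_def
    apply (rule has_derivative_vec3I)
      apply (simp_all add: matrix_vector_mult_def sum_3 F_vec_jacobian_def Let_def)
    using assms by (auto intro!: derivative_eq_intros simp: field_simps power2_eq_square pos)
qed

lemma det_F_vec_jacobian:
  assumes "v$1 \<noteq> 0"
  shows "det (F_vec_jacobian v) = - 4 / (v$1)^3"
  unfolding F_vec_jacobian_def Let_def det_3
  using assms by (simp add: field_simps power2_eq_square power3_eq_cube)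

definition iwasawa_regular :: "(real^3) set" where
  "iwasawa_regular = {w. 0 < w$2 \<and> iwasawa_abc w $ 1 \<noteq> 0}"

lemma has_derivative_F_iwasawa:
  assumes "w \<in> iwasawa_regular"
  shows "(F_iwasawa has_derivative
           (\<lambda>h. (F_vec_jacobian (iwasawa_abc w) ** iwasawa_jacobian w) *v h)) (at w)"
proof -
  have "((F_vec \<circ> iwasawa_abc) has_derivative
          (\<lambda>h. F_vec_jacobian (iwasawa_abc w) *v h) \<circ> (\<lambda>h. iwasawa_jacobian w *v h)) (at w)"
    using assms unfolding iwasawa_regular_def
    by (intro diff_chain_at has_derivative_iwasawa_abc has_derivative_F_vec) simp_all
  then show ?thesis
    by (simp add: F_iwasawa_def[abs_def] o_def matrix_vector_mul_assoc)
qed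

lemma jacobian_F_iwasawa_exp:
  assumes "w \<in> iwasawa_regular"
  shows "\<bar>det (F_vec_jacobian (iwasawa_abc w) ** iwasawa_jacobian w)\<bar> * exp (F_iwasawa w $ 3)
         = 1 / (w$2)\<^sup>2"
proof -
  define a where "a = iwasawa_abc w $ 1"
  have a: "a \<noteq> 0" and y: "0 < w$2" using assms by (simp_all add: iwasawa_regular_def a_def)
  have "exp (F_iwasawa w $ 3) = a\<^sup>2"
    using a by (simp add: F_iwasawa_def F_vec_def a_def)
  moreover have "det (F_vec_jacobian (iwasawa_abc w) ** iwasawa_jacobian w) = 1 / (a\<^sup>2 * (w$2)\<^sup>2)"
    using a y by (simp add: det_mul det_F_vec_jacobian det_iwasawa_jacobian a_def[symmetric]
        field_simps power2_eq_square power3_eq_cube)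
  ultimately show ?thesis
    using a by (simp add: field_simps)
qed

definition iwasawa_domain :: "(real^3) set" where
  "iwasawa_domain = {w \<in> iwasawa_regular. 0 \<le> w$3 \<and> w$3 < 2 * pi}"

lemma iwasawa_abc_eq:
  assumes "iwasawa (w$1) (w$2) (w$3 / 2) = (a, b, c, d)"
  shows "iwasawa_abc w = vector [a, b, c]"
  using assms by (simp add: iwasawa_abc_def)

lemma inj_on_F_iwasawa: "inj_on F_iwasawa iwasawa_domain"
proof (rule inj_onI)
  fix w w' assume w: "w \<in> iwasawa_domain" and w': "w' \<in> iwasawa_domain"
    and eq: "F_iwasawa w = F_iwasawa w'"
  obtain a b c d where g: "iwasawa (w$1) (w$2) (w$3 / 2) = (a, b, c, d)"
    by (metis prod_cases4)
  obtain a' b' c' d' where g': "iwasawa (w'$1) (w'$2) (w'$3 / 2) = (a', b', c', d')"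
    by (metis prod_cases4)
  have y: "0 < w$2" "0 < w'$2" and a: "a \<noteq> 0" "a' \<noteq> 0"
    using w w' iwasawa_abc_eq[OF g] iwasawa_abc_eq[OF g']
    by (auto simp: iwasawa_domain_def iwasawa_regular_def)
  have det: "a * d - b * c = 1" "a' * d' - b' * c' = 1"
    using iwasawa_coordinates(1) y g g' by blast+
  have "F_vec (vector [a', b', c']) = F_vec (vector [a, b, c])"
    using eq by (simp add: F_iwasawa_def iwasawa_abc_eq[OF g] iwasawa_abc_eq[OF g'])
  then have "vector [a', b', c'] = (vector [a, b, c] :: real^3) \<or> vector [a', b', c'] = - (vector [a, b, c] :: real^3)"
    using F_vec_inj_pm[of "vector [a, b, c]" "vector [a', b', c']"] a by simp
  then have "(a', b', c') = (a, b, c) \<or> (a', b', c') = (- a, - b, - c)"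
    by (auto simp: vec_eq_iff forall_3)
  then have "(a', b', c', d') = (a, b, c, d) \<or> (a', b', c', d') = mat_neg (a, b, c, d)"
  proof
    assume abc: "(a', b', c') = (a, b, c)"
    then have "a * d' - b * c = 1" using det(2) by simp
    then have "a * d' = a * d" using det(1) by linarith
    then show ?thesis using abc a(1) by simp
  next
    assume abc: "(a', b', c') = (- a, - b, - c)"
    then have "- (a * d') - b * c = 1" using det(2) by simp
    then have "a * d' = a * (- d)" using det(1) by simp
    then have "d' = - d" using a(1) by (metis mult_left_cancel)
    then show ?thesis using abc by (simp add: mat_neg_def)
  qed
  then have "w'$1 = w$1 \<and> w'$2 = w$2 \<and> w'$3 / 2 = w$3 / 2"
    using w w' y g g' by (intro iwasawa_psl2_unique) (auto simp: iwasawa_domain_def)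
  then show "w = w'"
    by (simp add: vec_eq_iff forall_3)
qed

lemma F_iwasawa_image: "F_iwasawa ` iwasawa_domain = UNIV"
proof (intro set_eqI iffI)
  fix u :: "real^3"
  obtain v where v: "0 < v$1" "F_vec v = u"
    using F_vec_surj by blast
  define d where "d = (1 + v$2 * v$3) / v$1"
  have "v$1 * d - v$2 * v$3 = 1"
    using v(1) by (simp add: d_def)
  then obtain x y t where xyt: "0 < y" "0 \<le> t" "t < pi"
    "iwasawa x y t = (v$1, v$2, v$3, d) \<or> iwasawa x y t = mat_neg (v$1, v$2, v$3, d)"
    by (rule iwasawa_psl2_exists)
  define w where "w = (vector [x, y, 2 * t] :: real^3)"
  have "iwasawa_abc w = v \<or> iwasawa_abc w = - v"
    using xyt(4) by (auto simp: w_def iwasawa_abc_def mat_neg_def vec_eq_iff forall_3)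
  then have "F_iwasawa w = u" "iwasawa_abc w $ 1 \<noteq> 0"
    using v by (auto simp: F_iwasawa_def F_vec_uminus)
  moreover have "w \<in> iwasawa_domain"
    using xyt \<open>iwasawa_abc w $ 1 \<noteq> 0\<close>
    by (simp add: w_def iwasawa_domain_def iwasawa_regular_def)
  ultimately show "u \<in> F_iwasawa ` iwasawa_domain" by blast
qed simp

lemma open_iwasawa_regular: "open iwasawa_regular"
proof -
  have "open {w :: real^3. 0 < w$2}"
    by (intro open_Collect_less continuous_intros)
  moreover have "continuous_on {w :: real^3. 0 < w$2} iwasawa_abc"
    using has_derivative_iwasawa_abc
    by (intro has_derivative_continuous_on) (auto intro: has_derivative_at_withinI)
  ultimately have "open ({w :: real^3. 0 < w$2} \<inter> (\<lambda>w. iwasawa_abc w $ 1) -` (- {0}))"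
    by (intro continuous_open_preimage continuous_intros) auto
  then show ?thesis
    by (simp add: iwasawa_regular_def Int_def)
qed

lemma continuous_on_F_iwasawa: "continuous_on iwasawa_regular F_iwasawa"
  using has_derivative_F_iwasawa
  by (intro has_derivative_continuous_on) (auto intro: has_derivative_at_withinI)

lemma iwasawa_domain_preimage_borel:
  assumes "closed K"
  shows "{w \<in> iwasawa_domain. F_iwasawa w \<in> K} \<in> sets borel"
proof -
  have "{w \<in> iwasawa_domain. F_iwasawa w \<in> K} =
        {w. 0 \<le> w$3 \<and> w$3 < 2 * pi} \<inter> (iwasawa_regular - (iwasawa_regular \<inter> F_iwasawa -` (- K)))"
    by (auto simp: iwasawa_domain_def)
  moreover have "open (iwasawa_regular \<inter> F_iwasawa -` (- K))"
    using assms by (intro continuous_open_preimage continuous_on_F_iwasawa open_iwasawa_regular) auto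
  moreover have "{w :: real^3. 0 \<le> w$3 \<and> w$3 < 2 * pi} \<in> sets borel"
    by measurable
  ultimately show ?thesis
    using open_iwasawa_regular by auto
qed

lemma nn_integral_iwasawa_domain:
  assumes "compact K"
  shows "(\<integral>\<^sup>+ w. ennreal (1 / (w$2)\<^sup>2) * indicator {w \<in> iwasawa_domain. F_iwasawa w \<in> K} w \<partial>lborel) =
         (\<integral>\<^sup>+ u. ennreal (exp (u$3)) * indicator K u \<partial>lborel)"
proof -
  define S where "S = {w \<in> iwasawa_domain. F_iwasawa w \<in> K}"
  define J where "J w = F_vec_jacobian (iwasawa_abc w) ** iwasawa_jacobian w" for w
  have "S \<in> sets borel"
    unfolding S_def using assms by (intro iwasawa_domain_preimage_borel compact_imp_closed)
  moreover have "F_iwasawa ` S = K"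
    using F_iwasawa_image by (auto simp: S_def)
  moreover have "(\<lambda>u. exp (u$3)) absolutely_integrable_on K"
  proof -
    obtain a b where "K \<subseteq> cbox a b"
      using compact_imp_bounded[OF assms] bounded_subset_cbox_symmetric by metis
    moreover have "(\<lambda>u :: real^3. exp (u$3)) absolutely_integrable_on cbox a b"
      by (intro absolutely_integrable_continuous continuous_intros)
    moreover have "K \<in> sets lebesgue"
      using assms by (simp add: compact_imp_closed borel_closed)
    ultimately show ?thesis
      by (metis set_integrable_subset)
  qed
  moreover have "(F_iwasawa has_derivative (\<lambda>h. J w *v h)) (at w within S)" if "w \<in> S" for w
    using that has_derivative_F_iwasawa
    by (auto simp: S_def J_def iwasawa_domain_def intro: has_derivative_at_withinI)
  moreover have "inj_on F_iwasawa S"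
    using inj_on_F_iwasawa by (rule inj_on_subset) (auto simp: S_def)
  ultimately have "(\<integral>\<^sup>+ w. ennreal (\<bar>det (J w)\<bar> * exp (F_iwasawa w $ 3)) * indicator S w \<partial>lborel) =
                   (\<integral>\<^sup>+ u. ennreal (exp (u$3)) * indicator K u \<partial>lborel)"
    using nn_integral_change_of_variables[of S F_iwasawa "\<lambda>w h. J w *v h" "\<lambda>u. exp (u$3)"] by simp
  moreover have "ennreal (\<bar>det (J w)\<bar> * exp (F_iwasawa w $ 3)) * indicator S w =
                 ennreal (1 / (w$2)\<^sup>2) * indicator S w" for w
    using jacobian_F_iwasawa_exp by (cases "w \<in> S") (simp_all add: S_def J_def iwasawa_domain_def)
  ultimately show ?thesis
    unfolding S_def[symmetric] by simp
qed

lemma iwasawa_in_calB_iff: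
  assumes "0 < y"
  shows "iwasawa x y (\<phi> / 2) \<in> calB X \<or> mat_neg (iwasawa x y (\<phi> / 2)) \<in> calB X \<longleftrightarrow>
         vec3 (x, y, \<phi>) \<in> iwasawa_regular \<and> F_iwasawa (vec3 (x, y, \<phi>)) \<in> vec3 ` X"
proof -
  obtain a b c d where g: "iwasawa x y (\<phi> / 2) = (a, b, c, d)"
    by (metis prod_cases4)
  have det: "a * d - b * c = 1"
    using iwasawa_coordinates(1)[OF assms g] .
  have abc: "iwasawa_abc (vec3 (x, y, \<phi>)) = vector [a, b, c]"
    by (rule iwasawa_abc_eq) (simp add: g)
  have neg: "vector [- a, - b, - c] = - (vector [a, b, c] :: real^3)"
    by (simp add: vec_eq_iff forall_3)
  have "iwasawa x y (\<phi> / 2) \<in> calB X \<longleftrightarrow> 0 < a \<and> F_vec (vector [a, b, c]) \<in> vec3 ` X"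
    by (cases "0 < a") (simp_all add: g det calB_def F_vec_eq_F_map inj_image_mem_iff[OF inj_vec3])
  moreover have "mat_neg (iwasawa x y (\<phi> / 2)) \<in> calB X \<longleftrightarrow> a < 0 \<and> F_vec (vector [a, b, c]) \<in> vec3 ` X"
    using F_vec_eq_F_map[of "- a" "- b" "- c"]
    by (cases "a < 0") (simp_all add: g det mat_neg_def calB_def neg F_vec_uminus inj_image_mem_iff[OF inj_vec3])
  ultimately show ?thesis
    using assms by (auto simp: iwasawa_regular_def F_iwasawa_def abc)
qed

lemma iwasawa_parameters_calB:
  "{(x, y, \<phi>). 0 < y \<and> 0 \<le> \<phi> \<and> \<phi> < 2 * pi \<and>
      (iwasawa x y (\<phi> / 2) \<in> calB X \<or> mat_neg (iwasawa x y (\<phi> / 2)) \<in> calB X)} =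
   vec3 -` {w \<in> iwasawa_domain. F_iwasawa w \<in> vec3 ` X}"
proof (intro set_eqI)
  fix p :: "real \<times> real \<times> real"
  obtain x y \<phi> where p: "p = (x, y, \<phi>)"
    by (metis prod_cases3)
  show "p \<in> {(x, y, \<phi>). 0 < y \<and> 0 \<le> \<phi> \<and> \<phi> < 2 * pi \<and>
      (iwasawa x y (\<phi> / 2) \<in> calB X \<or> mat_neg (iwasawa x y (\<phi> / 2)) \<in> calB X)} \<longleftrightarrow>
      p \<in> vec3 -` {w \<in> iwasawa_domain. F_iwasawa w \<in> vec3 ` X}"
    unfolding p by (cases "0 < y") (auto simp: iwasawa_in_calB_iff iwasawa_domain_def iwasawa_regular_def)
qed

theorem lemma3p4:
  fixes X :: "(real \<times> real \<times> real) set"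
  assumes "compact X"
    and "X \<subseteq> {x. 0 < fst x}"
  shows "psl2_std_vol (calB X) =
         (\<integral>\<^sup>+ x \<in> X. ennreal (exp (snd (snd x))) \<partial>(lborel :: (real \<times> real \<times> real) measure))"
proof -
  define K where "K = vec3 ` X"
  define S where "S = {w \<in> iwasawa_domain. F_iwasawa w \<in> K}"
  have "compact K"
    unfolding K_def using assms(1) by (intro compact_continuous_image continuous_on_vec3[THEN continuous_on_subset]) auto
  then have [measurable]: "S \<in> sets borel" "K \<in> sets borel"
    unfolding S_def by (simp_all add: iwasawa_domain_preimage_borel compact_imp_closed borel_closed)
  have "psl2_std_vol (calB X) = (\<integral>\<^sup>+ p. ennreal (1 / (vec3 p $ 2)\<^sup>2) * indicator S (vec3 p) \<partial>lborel)"
    unfolding psl2_std_vol_def iwasawa_parameters_calB indicator_vimage S_def K_def by (simp add: mult.commute)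
  also have "\<dots> = (\<integral>\<^sup>+ w. ennreal (1 / (w$2)\<^sup>2) * indicator S w \<partial>lborel)"
    by (rule nn_integral_vec3) measurable
  also have "\<dots> = (\<integral>\<^sup>+ u. ennreal (exp (u$3)) * indicator K u \<partial>lborel)"
    unfolding S_def by (rule nn_integral_iwasawa_domain) fact
  also have "\<dots> = (\<integral>\<^sup>+ p. ennreal (exp (vec3 p $ 3)) * indicator K (vec3 p) \<partial>lborel)"
    by (rule nn_integral_vec3[symmetric]) measurable
  also have "\<dots> = (\<integral>\<^sup>+ x \<in> X. ennreal (exp (snd (snd x))) \<partial>lborel)"
    by (simp add: K_def indicator_def inj_image_mem_iff[OF inj_vec3])
  finally show ?thesis .
qed

end
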